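(* Let $d,r\in\mathbb{N}$ with $r\ge 1$. Let $P=\mathcal{N}(\mu,\Sigma)$ be a Gaussian distribution on $\mathbb{R}^d$ with mean $\mu\in\mathbb{R}^d$ and symmetric positive-definite covariance matrix $\Sigma$, with density $p$. Let $Q$ be a probability measure on $\mathbb{R}^d$ with finite absolute moments of all orders up to $r$. Define $$\mathrm{PSD}=\sqrt{\sum_{\alpha\in\mathbb{N}_0^d:\,1\le|\alpha|\le r}\Big(\mathbb{E}_{X\sim Q}\big[(\mathcal{A}x^\alpha)(X)\big]\Big)^2}.$$ Then $\mathrm{PSD}=0$ if and only if $\mathbb{E}_{X\sim Q}[X^\alpha]=\mathbb{E}_{X\sim P}[X^\alpha]$ for every multi-index $\alpha\in\mathbb{N}_0^d$ with $|\alpha|\le r$ (i.e. all multi-index moments of $P$ and $Q$ agree up to order $r$).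
   Context: For $x\in\mathbb{R}^d$ write $x[i]$ for its $i$th coordinate and, for a multi-index $\alpha\in\mathbb{N}_0^d$, $x^\alpha=\prod_{i=1}^d x[i]^{\alpha_i}$ and $|\alpha|=\sum_i\alpha_i$. The (second-order Langevin) Stein operator associated with $p$ acts on twice differentiable $g:\mathbb{R}^d\to\mathbb{R}$ by $(\mathcal{A}g)(x)=\Delta g(x)+\nabla g(x)\cdot\nabla\log p(x)$, where $\Delta$ is the Laplacian; for the Gaussian $P$, $\nabla\log p(x)=-\Sigma^{-1}(x-\mu)$. $\mathrm{PSD}$ (polynomial Stein discrepancy of order $r$) is the supremum of $|\mathbb{E}_Q[\mathcal{A}g]|$ over $g=\sum_\alpha\beta_\alpha x^\alpha$ ($1\le|\alpha|\le r$) with $\|\beta\|_2\le1$, which equals the displayed formula. *)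

theory Defs
  imports "HOL-Probability.Probability"
begin

text \<open>Multi-indices on the coordinate index type 'n (dimension d = CARD('n)).\<close>

definition mi_order :: "('n::finite \<Rightarrow> nat) \<Rightarrow> nat" where
  "mi_order \<alpha> = (\<Sum>i\<in>UNIV. \<alpha> i)"

definition monomial :: "('n::finite \<Rightarrow> nat) \<Rightarrow> real^'n \<Rightarrow> real" where
  "monomial \<alpha> x = (\<Prod>i\<in>UNIV. (x $ i) ^ (\<alpha> i))"

definition partial :: "'n::finite \<Rightarrow> (real^'n \<Rightarrow> real) \<Rightarrow> real^'n \<Rightarrow> real" where
  "partial i g x = deriv (\<lambda>t. g (x + t *\<^sub>R axis i 1)) 0"

definition laplacian :: "(real^'n::finite \<Rightarrow> real) \<Rightarrow> real^'n \<Rightarrow> real" where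
  "laplacian g x = (\<Sum>i\<in>UNIV. partial i (partial i g) x)"

text \<open>Score of the Gaussian N(mu, Sigma): grad log p(x) = - Sigma^{-1} (x - mu).\<close>

definition gauss_score :: "real^'n::finite \<Rightarrow> real^'n^'n \<Rightarrow> real^'n \<Rightarrow> real^'n" where
  "gauss_score \<mu> \<Sigma> x = - (matrix_inv \<Sigma> *v (x - \<mu>))"

definition stein_op :: "real^'n::finite \<Rightarrow> real^'n^'n \<Rightarrow> (real^'n \<Rightarrow> real) \<Rightarrow> real^'n \<Rightarrow> real" where
  "stein_op \<mu> \<Sigma> g x = laplacian g x + (\<Sum>i\<in>UNIV. partial i g x * (gauss_score \<mu> \<Sigma> x) $ i)"

definition gauss_density :: "real^'n::finite \<Rightarrow> real^'n^'n \<Rightarrow> real^'n \<Rightarrow> real" where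
  "gauss_density \<mu> \<Sigma> x =
     exp (- ((x - \<mu>) \<bullet> (matrix_inv \<Sigma> *v (x - \<mu>))) / 2)
     / sqrt ((2 * pi) ^ CARD('n) * det \<Sigma>)"

definition gaussian :: "real^'n::finite \<Rightarrow> real^'n^'n \<Rightarrow> (real^'n) measure" where
  "gaussian \<mu> \<Sigma> = density lborel (\<lambda>x. ennreal (gauss_density \<mu> \<Sigma> x))"

definition sym_pos_def :: "real^'n::finite^'n \<Rightarrow> bool" where
  "sym_pos_def \<Sigma> \<longleftrightarrow> transpose \<Sigma> = \<Sigma> \<and> (\<forall>v. v \<noteq> 0 \<longrightarrow> v \<bullet> (\<Sigma> *v v) > 0)"

definition PSD :: "nat \<Rightarrow> real^'n::finite \<Rightarrow> real^'n^'n \<Rightarrow> (real^'n) measure \<Rightarrow> real" where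
  "PSD r \<mu> \<Sigma> Q = sqrt (\<Sum>\<alpha>\<in>{\<alpha>::'n \<Rightarrow> nat. 1 \<le> mi_order \<alpha> \<and> mi_order \<alpha> \<le> r}.
       (\<integral>x. stein_op \<mu> \<Sigma> (monomial \<alpha>) x \<partial>Q)\<^sup>2)"

end

theory Submission
  imports Defs "HOL-Real_Asymp.Real_Asymp"
begin

text \<open>Writing \<open>S = \<Sigma>\<^sup>-\<^sup>1\<close> and \<open>m\<^sub>R(\<beta>) = E\<^sub>R[x\<^sup>\<beta>]\<close>, the expectation \<open>E\<^sub>R[\<A>x\<^sup>\<alpha>]\<close> is a fixed linear
  combination of moments of order at most \<open>|\<alpha>|\<close>, and moments of the top order \<open>|\<alpha>|\<close> enter only through
  \<open>-\<Sum>\<^sub>i\<^sub>,\<^sub>l \<alpha>\<^sub>i S\<^sub>i\<^sub>l m(\<alpha> - e\<^sub>i + e\<^sub>l)\<close>. For the Gaussian \<open>P\<close> all these expectations vanish (Stein's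
  identity, by integration by parts against the density). Hence if they vanish for \<open>Q\<close> and
  \<open>1 \<le> |\<alpha>| \<le> r\<close>, the difference \<open>d = m\<^sub>Q - m\<^sub>P\<close> satisfies the same equations with \<open>d(0) = 0\<close>, and
  induction on the order gives \<open>d = 0\<close>: weighting the top-order equations by \<open>d(\<alpha>)/\<alpha>!\<close> and summing
  yields \<open>\<Sum>\<^sub>\<gamma> v\<^sub>\<gamma>\<^sup>T S v\<^sub>\<gamma> / \<gamma>! = 0\<close> with \<open>v\<^sub>\<gamma> = (d(\<gamma> + e\<^sub>i))\<^sub>i\<close>, so every \<open>v\<^sub>\<gamma>\<close> vanishes because \<open>S\<close> is
  positive definite. Conversely, equal moments up to order \<open>r\<close> give equal expectations.
  That the Gaussian density integrates to one is shown by completing the square one coordinate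
  at a time.\<close>

section \<open>Multi-indices and monomials\<close>

abbreviation mi_dec :: "('n \<Rightarrow> nat) \<Rightarrow> 'n \<Rightarrow> 'n \<Rightarrow> nat" where
  "mi_dec \<alpha> i \<equiv> \<alpha>(i := \<alpha> i - 1)"

abbreviation mi_inc :: "('n \<Rightarrow> nat) \<Rightarrow> 'n \<Rightarrow> 'n \<Rightarrow> nat" where
  "mi_inc \<alpha> i \<equiv> \<alpha>(i := \<alpha> i + 1)"

lemma mi_order_upd: "mi_order (\<alpha>(i := v)) + \<alpha> i = mi_order \<alpha> + v"
  unfolding mi_order_def by (simp add: sum.remove[of UNIV i] sum.remove[of UNIV i "\<alpha>(i:=v)"])

lemma mi_order_inc: "mi_order (mi_inc \<alpha> i) = mi_order \<alpha> + 1"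
  using mi_order_upd[of \<alpha> i "\<alpha> i + 1"] by simp

lemma mi_order_dec: "\<alpha> i \<noteq> 0 \<Longrightarrow> mi_order (mi_dec \<alpha> i) + 1 = mi_order \<alpha>"
  using mi_order_upd[of \<alpha> i "\<alpha> i - 1"] by simp

lemma mi_order_upd_le: "v \<le> \<alpha> i \<Longrightarrow> mi_order (\<alpha>(i := v)) \<le> mi_order \<alpha>"
  using mi_order_upd[of \<alpha> i v] by simp

lemma mi_order_inc_dec: "\<alpha> i \<noteq> 0 \<Longrightarrow> mi_order (mi_inc (mi_dec \<alpha> i) l) = mi_order \<alpha>"
  using mi_order_inc[of "mi_dec \<alpha> i" l] mi_order_dec[of \<alpha> i] by simp

lemma mi_order_eq_0_iff: "mi_order \<alpha> = 0 \<longleftrightarrow> \<alpha> = (\<lambda>_. 0)"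
  unfolding mi_order_def by (auto simp: fun_eq_iff)

lemma le_mi_order: "\<alpha> i \<le> mi_order \<alpha>"
  unfolding mi_order_def by (rule member_le_sum) auto

lemma finite_mi_order_le: "finite {\<alpha>::'n::finite \<Rightarrow> nat. mi_order \<alpha> \<le> r}"
proof (rule finite_subset)
  show "{\<alpha>::'n \<Rightarrow> nat. mi_order \<alpha> \<le> r} \<subseteq> PiE UNIV (\<lambda>_. {..r})"
    using le_mi_order by (auto simp: PiE_def Pi_def intro: order_trans)
qed (rule finite_PiE, auto)

definition mi_fact :: "('n::finite \<Rightarrow> nat) \<Rightarrow> real" where
  "mi_fact \<gamma> = (\<Prod>i\<in>UNIV. fact (\<gamma> i))"

lemma mi_fact_pos: "mi_fact \<gamma> > 0"
  unfolding mi_fact_def by (rule prod_pos) auto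

lemma mi_fact_inc: "mi_fact (mi_inc \<gamma> i) = (real (\<gamma> i) + 1) * mi_fact \<gamma>"
  unfolding mi_fact_def
  by (simp add: prod.remove[of UNIV i] prod.remove[of UNIV i "\<lambda>j. fact (\<gamma> j)"] algebra_simps)

lemma monomial_split: "monomial \<beta> x = x $ i ^ \<beta> i * (\<Prod>j\<in>UNIV-{i}. x $ j ^ \<beta> j)"
  unfolding monomial_def by (simp add: prod.remove)

lemma monomial_inc: "monomial (mi_inc \<beta> l) x = monomial \<beta> x * x $ l"
  unfolding monomial_split[of _ _ l] by simp

lemma monomial_zero [simp]: "monomial (\<lambda>_. 0) x = 1"
  unfolding monomial_def by simp

lemma abs_monomial_le: "\<bar>monomial \<beta> x\<bar> \<le> norm x ^ mi_order \<beta>"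
proof -
  have "\<bar>monomial \<beta> x\<bar> = (\<Prod>i\<in>UNIV. \<bar>x $ i\<bar> ^ \<beta> i)"
    unfolding monomial_def by (simp add: abs_prod power_abs)
  also have "\<dots> \<le> (\<Prod>i\<in>UNIV. norm x ^ \<beta> i)"
    by (intro prod_mono conjI power_mono) (auto intro: component_le_norm_cart)
  also have "\<dots> = norm x ^ mi_order \<beta>"
    unfolding mi_order_def power_sum ..
  finally show ?thesis .
qed

lemma continuous_on_monomial: "continuous_on UNIV (monomial \<beta> :: real^'n::finite \<Rightarrow> real)"
  unfolding monomial_def[abs_def] by (intro continuous_intros)

lemma borel_measurable_monomial [measurable]:
  "monomial \<beta> \<in> borel_measurable (borel :: (real^'n::finite) measure)"
  by (rule borel_measurable_continuous_onI[OF continuous_on_monomial])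

lemma has_real_derivative_monomial_line:
  fixes x :: "real^'n::finite"
  shows "((\<lambda>t. monomial \<beta> (x + t *\<^sub>R axis i 1)) has_real_derivative
          real (\<beta> i) * monomial (mi_dec \<beta> i) (x + t *\<^sub>R axis i 1)) (at t)"
proof -
  define C where "C = (\<Prod>j\<in>UNIV-{i}. x $ j ^ \<beta> j)"
  have line: "(x + s *\<^sub>R axis i 1) $ j = (if j = i then x $ j + s else x $ j)" for s j
    by (simp add: axis_def)
  have "monomial \<gamma> (x + s *\<^sub>R axis i 1) = (x $ i + s) ^ \<gamma> i * (\<Prod>j\<in>UNIV-{i}. x $ j ^ \<gamma> j)" for \<gamma> s
    unfolding monomial_split[of _ _ i] line by (auto intro!: prod.cong)
  moreover have "((\<lambda>t. (x $ i + t) ^ \<beta> i * C) has_real_derivative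
          real (\<beta> i) * ((x $ i + t) ^ (\<beta> i - 1) * C)) (at t)"
    by (auto intro!: derivative_eq_intros)
  ultimately show ?thesis by (simp add: C_def)
qed

lemma partial_monomial:
  "partial i (monomial \<beta>) = (\<lambda>x. real (\<beta> i) * monomial (mi_dec \<beta> i) x)"
  unfolding partial_def using DERIV_imp_deriv[OF has_real_derivative_monomial_line[of \<beta> _ i 0]]
  by (simp add: fun_eq_iff)

lemma partial_partial_monomial:
  "partial i (partial i (monomial \<beta>)) x =
     real (\<beta> i) * (real (\<beta> i - 1) * monomial (mi_dec (mi_dec \<beta> i) i) x)"
  unfolding partial_monomial partial_def
  using DERIV_imp_deriv[OF DERIV_cmult[OF has_real_derivative_monomial_line[of "mi_dec \<beta> i" x i 0]]]
  by simp

text \<open>For the Gaussian density \<open>p\<close>, \<open>stein_term \<mu> \<Sigma> \<beta> i \<cdot> p\<close> is the partial derivative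
  \<open>\<partial>\<^sub>i (x\<^sup>\<beta> p)\<close>.\<close>

definition stein_term :: "real^'n::finite \<Rightarrow> real^'n^'n \<Rightarrow> ('n \<Rightarrow> nat) \<Rightarrow> 'n \<Rightarrow> real^'n \<Rightarrow> real" where
  "stein_term \<mu> \<Sigma> \<beta> i x =
     real (\<beta> i) * monomial (mi_dec \<beta> i) x - monomial \<beta> x * (matrix_inv \<Sigma> *v (x - \<mu>)) $ i"

lemma stein_op_monomial:
  "stein_op \<mu> \<Sigma> (monomial \<alpha>) x = (\<Sum>i\<in>UNIV. real (\<alpha> i) * stein_term \<mu> \<Sigma> (mi_dec \<alpha> i) i x)"
  unfolding stein_op_def laplacian_def partial_partial_monomial
  unfolding partial_monomial gauss_score_def stein_term_def
  by (simp add: sum_subtractf[symmetric] sum.distrib[symmetric] vector_uminus_component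
      right_diff_distrib distrib_left mult.assoc)

section \<open>Stein expectations of monomials in terms of moments\<close>

text \<open>With \<open>S = \<Sigma>\<^sup>-\<^sup>1\<close> and \<open>m \<beta> = E\<^sub>R[x\<^sup>\<beta>]\<close>, \<open>stein_moments S \<mu> m \<alpha>\<close> is \<open>E\<^sub>R[\<A>x\<^sup>\<alpha>]\<close>
  (\<open>integral_stein_op_monomial\<close>).\<close>

definition stein_term_moments ::
  "real^'n^'n \<Rightarrow> real^'n::finite \<Rightarrow> (('n \<Rightarrow> nat) \<Rightarrow> real) \<Rightarrow> ('n \<Rightarrow> nat) \<Rightarrow> 'n \<Rightarrow> real" where
  "stein_term_moments S \<mu> m \<beta> i =
     real (\<beta> i) * m (mi_dec \<beta> i) - (\<Sum>l\<in>UNIV. S $ i $ l * m (mi_inc \<beta> l))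
     + (\<Sum>l\<in>UNIV. S $ i $ l * \<mu> $ l) * m \<beta>"

definition stein_moments ::
  "real^'n^'n \<Rightarrow> real^'n::finite \<Rightarrow> (('n \<Rightarrow> nat) \<Rightarrow> real) \<Rightarrow> ('n \<Rightarrow> nat) \<Rightarrow> real" where
  "stein_moments S \<mu> m \<alpha> = (\<Sum>i\<in>UNIV. real (\<alpha> i) * stein_term_moments S \<mu> m (mi_dec \<alpha> i) i)"

definition moments_integrable :: "(real^'n::finite) measure \<Rightarrow> nat \<Rightarrow> bool" where
  "moments_integrable R k \<longleftrightarrow> (\<forall>\<beta>. mi_order \<beta> \<le> k \<longrightarrow> integrable R (monomial \<beta>))"

lemma stein_term_eq_moments:
  "stein_term \<mu> \<Sigma> \<beta> i x = stein_term_moments (matrix_inv \<Sigma>) \<mu> (\<lambda>\<gamma>. monomial \<gamma> x) \<beta> i"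
  unfolding stein_term_def stein_term_moments_def monomial_inc
  by (simp add: matrix_vector_mult_def sum_distrib_left sum_distrib_right sum_subtractf
      right_diff_distrib algebra_simps)

lemma has_bochner_integral_stein_term:
  assumes "moments_integrable R (mi_order \<beta> + 1)"
  shows "has_bochner_integral R (stein_term \<mu> \<Sigma> \<beta> i)
           (stein_term_moments (matrix_inv \<Sigma>) \<mu> (\<lambda>\<gamma>. \<integral>x. monomial \<gamma> x \<partial>R) \<beta> i)"
proof -
  have "has_bochner_integral R (monomial \<gamma>) (\<integral>x. monomial \<gamma> x \<partial>R)" if "mi_order \<gamma> \<le> mi_order \<beta> + 1" for \<gamma>
    using assms that unfolding moments_integrable_def by (simp add: has_bochner_integral_integrable)
  moreover have "mi_order (mi_dec \<beta> i) \<le> mi_order \<beta> + 1" "mi_order (mi_inc \<beta> l) \<le> mi_order \<beta> + 1" for l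
    using mi_order_upd_le[of "\<beta> i - 1" \<beta> i] mi_order_inc[of \<beta> l] by auto
  ultimately show ?thesis
    unfolding stein_term_eq_moments[abs_def] stein_term_moments_def
    by (intro has_bochner_integral_add has_bochner_integral_diff has_bochner_integral_sum
        has_bochner_integral_mult_right) auto
qed

lemma integral_stein_op_monomial:
  assumes "moments_integrable R (mi_order \<alpha>)"
  shows "(\<integral>x. stein_op \<mu> \<Sigma> (monomial \<alpha>) x \<partial>R) =
           stein_moments (matrix_inv \<Sigma>) \<mu> (\<lambda>\<gamma>. \<integral>x. monomial \<gamma> x \<partial>R) \<alpha>"
proof -
  have "has_bochner_integral R (\<lambda>x. real (\<alpha> i) * stein_term \<mu> \<Sigma> (mi_dec \<alpha> i) i x)
          (real (\<alpha> i) * stein_term_moments (matrix_inv \<Sigma>) \<mu> (\<lambda>\<gamma>. \<integral>x. monomial \<gamma> x \<partial>R) (mi_dec \<alpha> i) i)"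
    for i
  proof (cases "\<alpha> i = 0")
    case False
    then show ?thesis
      using assms mi_order_dec[of \<alpha> i]
      by (intro has_bochner_integral_mult_right has_bochner_integral_stein_term) simp
  qed (simp add: has_bochner_integral_zero)
  then show ?thesis
    unfolding stein_op_monomial stein_moments_def
    by (intro has_bochner_integral_integral_eq has_bochner_integral_sum) auto
qed

lemma stein_moments_cong:
  assumes "\<And>\<beta>. mi_order \<beta> \<le> mi_order \<alpha> \<Longrightarrow> m \<beta> = m' \<beta>"
  shows "stein_moments S \<mu> m \<alpha> = stein_moments S \<mu> m' \<alpha>"
proof -
  have summand_eq: "real (\<alpha> i) * stein_term_moments S \<mu> m (mi_dec \<alpha> i) i
      = real (\<alpha> i) * stein_term_moments S \<mu> m' (mi_dec \<alpha> i) i" for i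
  proof (cases "\<alpha> i = 0")
    case False
    have "mi_order (mi_dec (mi_dec \<alpha> i) i) \<le> mi_order \<alpha>" "mi_order (mi_dec \<alpha> i) \<le> mi_order \<alpha>"
      by (auto intro: order_trans[OF mi_order_upd_le] mi_order_upd_le)
    then show ?thesis
      using False assms mi_order_inc_dec[of \<alpha> i] by (simp add: stein_term_moments_def)
  qed simp
  show ?thesis unfolding stein_moments_def using summand_eq by (rule sum.cong[OF refl])
qed

lemma stein_moments_diff:
  "stein_moments S \<mu> (\<lambda>\<beta>. m \<beta> - m' \<beta>) \<alpha> = stein_moments S \<mu> m \<alpha> - stein_moments S \<mu> m' \<alpha>"
proof -
  have "stein_term_moments S \<mu> (\<lambda>\<beta>. m \<beta> - m' \<beta>) \<beta> i
      = stein_term_moments S \<mu> m \<beta> i - stein_term_moments S \<mu> m' \<beta> i" for \<beta> i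
    unfolding stein_term_moments_def by (simp add: algebra_simps sum_subtractf)
  then show ?thesis
    unfolding stein_moments_def by (simp add: right_diff_distrib sum_subtractf)
qed

lemma stein_moments_top_order:
  assumes "\<And>\<beta>. mi_order \<beta> < mi_order \<alpha> \<Longrightarrow> d \<beta> = 0"
  shows "stein_moments S \<mu> d \<alpha> =
           - (\<Sum>i\<in>UNIV. \<Sum>l\<in>UNIV. real (\<alpha> i) * S $ i $ l * d (mi_inc (mi_dec \<alpha> i) l))"
proof -
  have "real (\<alpha> i) * stein_term_moments S \<mu> d (mi_dec \<alpha> i) i =
          - (\<Sum>l\<in>UNIV. real (\<alpha> i) * S $ i $ l * d (mi_inc (mi_dec \<alpha> i) l))" for i
  proof (cases "\<alpha> i = 0")
    case False
    have low: "d (mi_dec \<alpha> i) = 0"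
      using False assms mi_order_dec[of \<alpha> i] by simp
    show ?thesis
    proof (cases "\<alpha> i = 1")
      case False
      then have "mi_order (mi_dec (mi_dec \<alpha> i) i) < mi_order \<alpha>"
        using \<open>\<alpha> i \<noteq> 0\<close> mi_order_upd[of \<alpha> i "\<alpha> i - 1 - 1"] by simp
      then have "d (mi_dec (mi_dec \<alpha> i) i) = 0" using assms by blast
      then show ?thesis
        using low by (simp add: stein_term_moments_def sum_distrib_left mult.assoc)
    qed (use low in \<open>simp add: stein_term_moments_def sum_distrib_left mult.assoc\<close>)
  qed simp
  then show ?thesis unfolding stein_moments_def by (simp add: sum_negf)
qed

section \<open>Stein expectations determine the moments\<close>

lemma sum_mi_order_Suc_reindex:
  "(\<Sum>\<alpha>\<in>{\<alpha>::'n::finite \<Rightarrow> nat. mi_order \<alpha> = Suc k \<and> \<alpha> i \<noteq> 0}. g \<alpha>)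
     = (\<Sum>\<gamma>\<in>{\<gamma>. mi_order \<gamma> = k}. g (mi_inc \<gamma> i))"
proof -
  have "(\<lambda>\<gamma>. mi_inc \<gamma> i) ` {\<gamma>. mi_order \<gamma> = k} = {\<alpha>. mi_order \<alpha> = Suc k \<and> \<alpha> i \<noteq> 0}"
  proof (intro equalityI subsetI)
    fix \<alpha> assume "\<alpha> \<in> {\<alpha>. mi_order \<alpha> = Suc k \<and> \<alpha> i \<noteq> 0}"
    then have "\<alpha> = mi_inc (mi_dec \<alpha> i) i" "mi_order (mi_dec \<alpha> i) = k"
      using mi_order_dec[of \<alpha> i] by auto
    then show "\<alpha> \<in> (\<lambda>\<gamma>. mi_inc \<gamma> i) ` {\<gamma>. mi_order \<gamma> = k}" by blast
  qed (use mi_order_inc in auto)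
  moreover have "inj_on (\<lambda>\<gamma>. mi_inc \<gamma> i) {\<gamma>. mi_order \<gamma> = k}"
    by (rule inj_onI) (metis fun_upd_idem_iff fun_upd_upd add_right_cancel)
  ultimately show ?thesis
    by (metis (no_types, lifting) sum.reindex_cong)
qed

text \<open>Weighting by \<open>1/\<alpha>!\<close> turns the factor \<open>\<alpha> i\<close> into \<open>1/(\<alpha> - e\<^sub>i)!\<close>, so that
  reindexing \<open>\<alpha> = \<gamma> + e\<^sub>i\<close> collects the sum into quadratic forms.\<close>

lemma sum_top_order_eq_sum_quadratic_forms:
  fixes S :: "real^'n::finite^'n" and d :: "('n \<Rightarrow> nat) \<Rightarrow> real"
  defines "v \<equiv> \<lambda>\<gamma>. \<chi> i. d (mi_inc \<gamma> i)"
  shows "(\<Sum>\<alpha>\<in>{\<alpha>. mi_order \<alpha> = Suc k}.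
            d \<alpha> / mi_fact \<alpha> * (\<Sum>i\<in>UNIV. \<Sum>l\<in>UNIV. real (\<alpha> i) * S $ i $ l * d (mi_inc (mi_dec \<alpha> i) l)))
       = (\<Sum>\<gamma>\<in>{\<gamma>. mi_order \<gamma> = k}. v \<gamma> \<bullet> (S *v v \<gamma>) / mi_fact \<gamma>)"
proof -
  let ?A = "{\<alpha>::'n \<Rightarrow> nat. mi_order \<alpha> = Suc k}" and ?G = "{\<gamma>::'n \<Rightarrow> nat. mi_order \<gamma> = k}"
  let ?row = "\<lambda>i \<gamma>. \<Sum>l\<in>UNIV. S $ i $ l * d (mi_inc \<gamma> l)"
  let ?f = "\<lambda>i \<alpha>. d \<alpha> * real (\<alpha> i) / mi_fact \<alpha> * ?row i (mi_dec \<alpha> i)"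
  have "(\<Sum>\<alpha>\<in>?A. d \<alpha> / mi_fact \<alpha> * (\<Sum>i\<in>UNIV. \<Sum>l\<in>UNIV. real (\<alpha> i) * S $ i $ l * d (mi_inc (mi_dec \<alpha> i) l)))
      = (\<Sum>\<alpha>\<in>?A. \<Sum>i\<in>UNIV. ?f i \<alpha>)"
    by (intro sum.cong refl) (simp add: sum_distrib_left mult_ac)
  also have "\<dots> = (\<Sum>i\<in>UNIV. \<Sum>\<alpha>\<in>?A. ?f i \<alpha>)"
    by (rule sum.swap)
  also have "\<dots> = (\<Sum>i\<in>UNIV. \<Sum>\<alpha>\<in>{\<alpha>. mi_order \<alpha> = Suc k \<and> \<alpha> i \<noteq> 0}. ?f i \<alpha>)"
    by (intro sum.cong refl sum.mono_neutral_right)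
       (auto intro: finite_subset[OF _ finite_mi_order_le[of "Suc k"]])
  also have "\<dots> = (\<Sum>i\<in>UNIV. \<Sum>\<gamma>\<in>?G. ?f i (mi_inc \<gamma> i))"
    by (simp only: sum_mi_order_Suc_reindex)
  also have "\<dots> = (\<Sum>i\<in>UNIV. \<Sum>\<gamma>\<in>?G. d (mi_inc \<gamma> i) / mi_fact \<gamma> * ?row i \<gamma>)"
  proof (intro sum.cong refl)
    fix i :: 'n and \<gamma> :: "'n \<Rightarrow> nat"
    have cancel: "x * (real (\<gamma> i) + 1) / ((real (\<gamma> i) + 1) * f) = x / f" for x f :: real
      by simp
    have "mi_dec (mi_inc \<gamma> i) i = \<gamma>" "real (mi_inc \<gamma> i i) = real (\<gamma> i) + 1" by simp_all
    then show "?f i (mi_inc \<gamma> i) = d (mi_inc \<gamma> i) / mi_fact \<gamma> * ?row i \<gamma>"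
      unfolding mi_fact_inc by (simp only: cancel)
  qed
  also have "\<dots> = (\<Sum>\<gamma>\<in>?G. \<Sum>i\<in>UNIV. d (mi_inc \<gamma> i) / mi_fact \<gamma> * ?row i \<gamma>)"
    by (rule sum.swap)
  also have "\<dots> = (\<Sum>\<gamma>\<in>?G. v \<gamma> \<bullet> (S *v v \<gamma>) / mi_fact \<gamma>)"
    unfolding v_def inner_vec_def matrix_vector_mult_def sum_divide_distrib
    by (intro sum.cong refl) simp
  finally show ?thesis .
qed

lemma top_order_eq_0:
  fixes S :: "real^'n::finite^'n"
  assumes pd: "\<And>v. v \<noteq> 0 \<Longrightarrow> v \<bullet> (S *v v) > 0"
    and top: "\<And>\<alpha>. mi_order \<alpha> = Suc k \<Longrightarrow>
               (\<Sum>i\<in>UNIV. \<Sum>l\<in>UNIV. real (\<alpha> i) * S $ i $ l * d (mi_inc (mi_dec \<alpha> i) l)) = 0"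
    and \<beta>: "mi_order \<beta> = Suc k"
  shows "d \<beta> = 0"
proof -
  let ?G = "{\<gamma>::'n \<Rightarrow> nat. mi_order \<gamma> = k}"
  define v where "v \<gamma> = (\<chi> i. d (mi_inc \<gamma> i))" for \<gamma>
  have nonneg: "v \<gamma> \<bullet> (S *v v \<gamma>) / mi_fact \<gamma> \<ge> 0" for \<gamma>
    using pd[of "v \<gamma>"] mi_fact_pos[of \<gamma>] by (cases "v \<gamma> = 0") auto
  have fin: "finite ?G"
    by (rule finite_subset[OF _ finite_mi_order_le[of k]]) auto
  have "(\<Sum>\<gamma>\<in>?G. v \<gamma> \<bullet> (S *v v \<gamma>) / mi_fact \<gamma>) = 0"
    using sum_top_order_eq_sum_quadratic_forms[where d=d and k=k and S=S] top unfolding v_def by simp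
  then have zero: "v \<gamma> \<bullet> (S *v v \<gamma>) / mi_fact \<gamma> = 0" if "\<gamma> \<in> ?G" for \<gamma>
    using sum_nonneg_eq_0_iff[OF fin, of "\<lambda>\<gamma>. v \<gamma> \<bullet> (S *v v \<gamma>) / mi_fact \<gamma>"] nonneg that by simp
  have v0: "v \<gamma> = 0" if "\<gamma> \<in> ?G" for \<gamma>
    using zero[OF that] pd[of "v \<gamma>"] mi_fact_pos[of \<gamma>] by (cases "v \<gamma> = 0") auto
  obtain i where i: "\<beta> i \<noteq> 0"
    using \<beta> mi_order_eq_0_iff[of \<beta>] by fastforce
  have "mi_dec \<beta> i \<in> ?G"
    using \<beta> mi_order_dec[of \<beta> i] i by simp
  moreover have "d \<beta> = v (mi_dec \<beta> i) $ i"
    using i by (simp add: v_def)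
  ultimately show "d \<beta> = 0"
    using v0 by simp
qed

lemma stein_moments_determine_moments:
  fixes S :: "real^'n::finite^'n"
  assumes pd: "\<And>v. v \<noteq> 0 \<Longrightarrow> v \<bullet> (S *v v) > 0"
    and stein_m': "\<And>\<alpha>. stein_moments S \<mu> m' \<alpha> = 0"
    and mass: "m (\<lambda>_. 0) = m' (\<lambda>_. 0)"
  shows "(\<forall>\<alpha>. 1 \<le> mi_order \<alpha> \<and> mi_order \<alpha> \<le> r \<longrightarrow> stein_moments S \<mu> m \<alpha> = 0) \<longleftrightarrow>
         (\<forall>\<beta>. mi_order \<beta> \<le> r \<longrightarrow> m \<beta> = m' \<beta>)"
proof
  assume stein_m: "\<forall>\<alpha>. 1 \<le> mi_order \<alpha> \<and> mi_order \<alpha> \<le> r \<longrightarrow> stein_moments S \<mu> m \<alpha> = 0"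
  define d where "d = (\<lambda>\<beta>. m \<beta> - m' \<beta>)"
  have "d \<beta> = 0" if "mi_order \<beta> \<le> r" for \<beta>
    using that
  proof (induction "mi_order \<beta>" arbitrary: \<beta> rule: less_induct)
    case less
    show ?case
    proof (cases "mi_order \<beta>")
      case 0
      then show ?thesis using mass mi_order_eq_0_iff[of \<beta>] by (simp add: d_def)
    next
      case (Suc k)
      have "(\<Sum>i\<in>UNIV. \<Sum>l\<in>UNIV. real (\<alpha> i) * S $ i $ l * d (mi_inc (mi_dec \<alpha> i) l)) = 0"
        if "mi_order \<alpha> = Suc k" for \<alpha>
      proof -
        have "stein_moments S \<mu> d \<alpha> = 0"
          using stein_m stein_m' that less.prems Suc by (simp add: d_def stein_moments_diff)
        moreover have "stein_moments S \<mu> d \<alpha> =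
            - (\<Sum>i\<in>UNIV. \<Sum>l\<in>UNIV. real (\<alpha> i) * S $ i $ l * d (mi_inc (mi_dec \<alpha> i) l))"
          using less.hyps less.prems that Suc by (intro stein_moments_top_order) simp
        ultimately show ?thesis by simp
      qed
      then show ?thesis using top_order_eq_0[OF pd] Suc by blast
    qed
  qed
  then show "\<forall>\<beta>. mi_order \<beta> \<le> r \<longrightarrow> m \<beta> = m' \<beta>" by (simp add: d_def)
next
  assume "\<forall>\<beta>. mi_order \<beta> \<le> r \<longrightarrow> m \<beta> = m' \<beta>"
  then show "\<forall>\<alpha>. 1 \<le> mi_order \<alpha> \<and> mi_order \<alpha> \<le> r \<longrightarrow> stein_moments S \<mu> m \<alpha> = 0"
    using stein_m' stein_moments_cong[of _ m m' S \<mu>] by (metis order_trans)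
qed

section \<open>Gaussian integrals\<close>

definition quad_form :: "real^'n::finite^'n \<Rightarrow> real^'n \<Rightarrow> real" where
  "quad_form M x = x \<bullet> (M *v x)"

lemma quad_form_eq_sum: "quad_form M x = (\<Sum>i\<in>UNIV. \<Sum>j\<in>UNIV. x $ i * M $ i $ j * x $ j)"
  unfolding quad_form_def
  by (simp add: inner_vec_def matrix_vector_mult_def sum_distrib_left mult.assoc)

lemma continuous_on_quad_form: "continuous_on UNIV (quad_form M)"
  unfolding quad_form_eq_sum[abs_def] by (intro continuous_intros)

lemma borel_measurable_quad_form [measurable]: "quad_form M \<in> borel_measurable borel"
  by (rule borel_measurable_continuous_onI[OF continuous_on_quad_form])

lemma inner_axis_matrix_axis: "axis i 1 \<bullet> (A *v axis j 1) = (A::real^'n::finite^'n) $ i $ j"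
  by (simp add: matrix_vector_mult_basis inner_axis' column_def)

lemma quad_form_axis: "quad_form A (axis i 1) = A $ i $ i"
  unfolding quad_form_def by (rule inner_axis_matrix_axis)

lemma quad_form_add: "quad_form A (u + v) = quad_form A u + u \<bullet> (A *v v) + v \<bullet> (A *v u) + quad_form A v"
  unfolding quad_form_def by (simp add: matrix_vector_right_distrib inner_add_left inner_add_right)

lemma quad_form_scaleR: "quad_form M (c *\<^sub>R v) = c\<^sup>2 * quad_form M v"
  unfolding quad_form_def by (simp add: matrix_vector_mult_scaleR power2_eq_square)

lemma quad_form_mat: "quad_form (mat k) x = k * (norm x)\<^sup>2"
proof -
  have "x $ i * mat k $ i $ j * x $ j = (if j = i then k * (x $ i * x $ i) else 0)" for i j
    by (auto simp: mat_def)
  then have "quad_form (mat k) x = (\<Sum>i\<in>UNIV. k * (x $ i * x $ i))"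
    unfolding quad_form_eq_sum by simp
  then show ?thesis by (simp add: power2_norm_eq_inner inner_vec_def sum_distrib_left)
qed

lemma quad_form_matrix_vector_mult: "quad_form M (U *v x) = quad_form (transpose U ** M ** U) x"
proof -
  have "quad_form M (U *v x) = (x v* transpose U) \<bullet> (M *v (U *v x))"
    unfolding quad_form_def by simp
  also have "\<dots> = x \<bullet> (transpose U *v (M *v (U *v x)))"
    by (rule dot_lmul_matrix)
  finally show ?thesis
    unfolding quad_form_def by (simp add: matrix_vector_mul_assoc matrix_mul_assoc)
qed

lemma symmetric_matrix_entry: "transpose A = A \<Longrightarrow> A $ j $ i = (A::real^'n::finite^'n) $ i $ j"
  by (metis transpose_def vec_lambda_beta)

lemma symmetric_matrix_eqI:
  fixes A B :: "real^'n::finite^'n"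
  assumes "transpose A = A" "transpose B = B" "\<And>x. quad_form A x = quad_form B x"
  shows "A = B"
proof -
  have "A $ i $ j = B $ i $ j" for i j
  proof -
    have expand: "quad_form M (axis i 1 + axis j 1) = M $ i $ i + 2 * M $ i $ j + M $ j $ j"
      if "transpose M = M" for M :: "real^'n^'n"
      unfolding quad_form_add quad_form_axis inner_axis_matrix_axis
      using symmetric_matrix_entry[OF that, of i j] by simp
    show ?thesis
      using expand[OF assms(1)] expand[OF assms(2)] assms(3)[of "axis i 1 + axis j 1"]
        assms(3)[of "axis i 1"] assms(3)[of "axis j 1"]
      by (simp add: quad_form_axis)
  qed
  then show ?thesis by (simp add: vec_eq_iff)
qed

interpretation lborel_product: product_sigma_finite "\<lambda>_::real^'n::finite. lborel :: real measure"
  by standard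

lemma sum_Basis_upd:
  fixes b :: "real^'n::finite"
  assumes "b \<in> Basis"
  shows "(\<Sum>c\<in>Basis. (g(b := y)) c *\<^sub>R c) = (\<Sum>c\<in>Basis-{b}. g c *\<^sub>R c) + y *\<^sub>R b"
  using assms by (simp add: sum.remove[of Basis b] add.commute)

lemma nn_integral_lborel_split_Basis:
  fixes f :: "real^'n::finite \<Rightarrow> ennreal" and b :: "real^'n"
  assumes [measurable]: "f \<in> borel_measurable borel" and b: "b \<in> Basis"
  shows "(\<integral>\<^sup>+x. f x \<partial>lborel) =
    (\<integral>\<^sup>+g. (\<integral>\<^sup>+y. f ((\<Sum>c\<in>Basis-{b}. g c *\<^sub>R c) + y *\<^sub>R b) \<partial>lborel) \<partial>(PiM (Basis-{b}) (\<lambda>_. lborel)))"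
proof -
  have Basis: "Basis = insert b (Basis - {b})" using b by auto
  have "(\<integral>\<^sup>+x. f x \<partial>lborel) = (\<integral>\<^sup>+g. f (\<Sum>c\<in>Basis. g c *\<^sub>R c) \<partial>(PiM Basis (\<lambda>_. lborel)))"
    by (subst lborel_eq) (simp add: nn_integral_distr)
  also have "\<dots> = (\<integral>\<^sup>+g. f (\<Sum>c\<in>Basis. g c *\<^sub>R c) \<partial>(PiM (insert b (Basis - {b})) (\<lambda>_. lborel)))"
    using Basis by simp
  also have "\<dots> = (\<integral>\<^sup>+g. (\<integral>\<^sup>+y. f (\<Sum>c\<in>Basis. (g(b := y)) c *\<^sub>R c) \<partial>lborel) \<partial>(PiM (Basis-{b}) (\<lambda>_. lborel)))"
    by (subst lborel_product.product_nn_integral_insert) (auto simp flip: Basis)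
  finally show ?thesis unfolding sum_Basis_upd[OF b] .
qed

lemma integral_lborel_split_Basis:
  fixes f :: "real^'n::finite \<Rightarrow> real" and b :: "real^'n"
  assumes f: "integrable lborel f" and b: "b \<in> Basis"
  shows "(\<integral>x. f x \<partial>lborel) =
    (\<integral>g. (\<integral>y. f ((\<Sum>c\<in>Basis-{b}. g c *\<^sub>R c) + y *\<^sub>R b) \<partial>lborel) \<partial>(PiM (Basis-{b}) (\<lambda>_. lborel)))"
proof -
  have Basis: "Basis = insert b (Basis - {b})" using b by auto
  have m: "(\<lambda>g. \<Sum>c\<in>Basis. g c *\<^sub>R c) \<in> PiM Basis (\<lambda>_. lborel) \<rightarrow>\<^sub>M (borel :: (real^'n) measure)"
    by measurable
  have fm: "f \<in> borel_measurable borel" using borel_measurable_integrable[OF f] by simp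
  have fi: "integrable (PiM Basis (\<lambda>_. lborel)) (\<lambda>g. f (\<Sum>c\<in>Basis. g c *\<^sub>R c))"
    using f by (subst (asm) lborel_eq) (simp add: integrable_distr_eq[OF m fm])
  have "(\<integral>x. f x \<partial>lborel) = (\<integral>g. f (\<Sum>c\<in>Basis. g c *\<^sub>R c) \<partial>(PiM Basis (\<lambda>_. lborel)))"
    using f by (subst lborel_eq) (simp add: integral_distr[OF m])
  also have "\<dots> = (\<integral>g. f (\<Sum>c\<in>Basis. g c *\<^sub>R c) \<partial>(PiM (insert b (Basis - {b})) (\<lambda>_. lborel)))"
    using Basis by simp
  also have "\<dots> = (\<integral>g. (\<integral>y. f (\<Sum>c\<in>Basis. (g(b := y)) c *\<^sub>R c) \<partial>lborel) \<partial>(PiM (Basis-{b}) (\<lambda>_. lborel)))"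
    by (subst lborel_product.product_integral_insert) (use fi Basis in auto)
  finally show ?thesis unfolding sum_Basis_upd[OF b] .
qed

lemma nn_integral_lborel_shear:
  fixes f :: "real^'n::finite \<Rightarrow> ennreal" and b :: "real^'n" and c :: "real^'n \<Rightarrow> real"
  assumes [measurable]: "f \<in> borel_measurable borel" "c \<in> borel_measurable borel" and b: "b \<in> Basis"
    and c: "\<And>x t. c (x + t *\<^sub>R b) = c x"
  shows "(\<integral>\<^sup>+x. f (x + c x *\<^sub>R b) \<partial>lborel) = (\<integral>\<^sup>+x. f x \<partial>lborel)"
proof -
  have line: "(\<integral>\<^sup>+y. f ((x0 + y *\<^sub>R b) + c (x0 + y *\<^sub>R b) *\<^sub>R b) \<partial>lborel) = (\<integral>\<^sup>+y. f (x0 + y *\<^sub>R b) \<partial>lborel)"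
    for x0
  proof -
    have "(\<integral>\<^sup>+y. f ((x0 + y *\<^sub>R b) + c (x0 + y *\<^sub>R b) *\<^sub>R b) \<partial>lborel)
        = (\<integral>\<^sup>+y. f (x0 + y *\<^sub>R b) \<partial>distr lborel borel ((+) (c x0)))"
      by (subst nn_integral_distr) (auto simp: c algebra_simps)
    then show ?thesis by (simp add: lborel_distr_plus)
  qed
  show ?thesis
    by (subst (1 2) nn_integral_lborel_split_Basis[OF _ b]) (auto simp: line)
qed

lemma nn_integral_lborel_translate:
  fixes f :: "real^'n::finite \<Rightarrow> ennreal"
  assumes [measurable]: "f \<in> borel_measurable borel"
  shows "(\<integral>\<^sup>+x. f (x - \<mu>) \<partial>lborel) = (\<integral>\<^sup>+x. f x \<partial>lborel)"
proof -
  have "(\<integral>\<^sup>+x. f (x - \<mu>) \<partial>lborel) = (\<integral>\<^sup>+x. f x \<partial>distr lborel borel ((+) (- \<mu>)))"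
    by (subst nn_integral_distr) auto
  then show ?thesis by (simp add: lborel_distr_plus)
qed

lemma nn_integral_gauss_1d:
  fixes a :: real
  assumes a: "a > 0"
  shows "(\<integral>\<^sup>+t. ennreal (exp (- (a * t\<^sup>2) / 2)) \<partial>lborel) = ennreal (sqrt (2 * pi / a))"
proof -
  define \<sigma> where "\<sigma> = 1 / sqrt a"
  have \<sigma>: "\<sigma> > 0" "\<sigma>\<^sup>2 = 1 / a" using a by (auto simp: \<sigma>_def power_divide)
  have density: "normal_density 0 \<sigma> t = sqrt (a / (2 * pi)) * exp (- (a * t\<^sup>2) / 2)" for t
    unfolding normal_density_def \<sigma> using a by (simp add: real_sqrt_divide field_simps)
  have "1 = (\<integral>\<^sup>+t. ennreal (normal_density 0 \<sigma> t) \<partial>lborel)"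
    by (subst nn_integral_eq_integral)
       (auto simp: integrable_normal_density[OF \<sigma>(1)] integral_normal_density[OF \<sigma>(1)])
  also have "\<dots> = ennreal (sqrt (a / (2 * pi))) * (\<integral>\<^sup>+t. ennreal (exp (- (a * t\<^sup>2) / 2)) \<partial>lborel)"
    unfolding density using a
    by (subst nn_integral_cmult[symmetric]) (auto intro!: nn_integral_cong simp: ennreal_mult)
  finally have inv: "ennreal (sqrt (a / (2 * pi))) * (\<integral>\<^sup>+t. ennreal (exp (- (a * t\<^sup>2) / 2)) \<partial>lborel) = 1" ..
  have "(\<integral>\<^sup>+t. ennreal (exp (- (a * t\<^sup>2) / 2)) \<partial>lborel)
      = ennreal (1 / sqrt (a / (2 * pi))) * (ennreal (sqrt (a / (2 * pi))) * (\<integral>\<^sup>+t. ennreal (exp (- (a * t\<^sup>2) / 2)) \<partial>lborel))"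
    using a by (simp add: ennreal_mult[symmetric] mult.assoc[symmetric] del: ennreal_mult)
  also have "\<dots> = ennreal (sqrt (2 * pi / a))"
    unfolding inv using a by (simp add: real_sqrt_divide)
  finally show ?thesis .
qed

lemma real_sqrt_prod: "sqrt (prod f A) = (\<Prod>i\<in>A. sqrt (f i))"
  by (induction A rule: infinite_finite_induct) (auto simp: real_sqrt_mult)

lemma prod_Basis_vec: "(\<Prod>b\<in>(Basis::(real^'n::finite) set). G b) = (\<Prod>i\<in>UNIV. G (axis i 1))"
  by (simp add: Basis_vec_def UNION_singleton_eq_range prod.reindex axis_eq_axis inj_on_def)

lemma nn_integral_gauss_diagonal:
  fixes M :: "real^'n::finite^'n"
  assumes diag: "\<And>i j. i \<noteq> j \<Longrightarrow> M $ i $ j = 0" and pos: "\<And>i. M $ i $ i > 0"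
  shows "(\<integral>\<^sup>+x. ennreal (exp (- quad_form M x / 2)) \<partial>lborel) = ennreal (sqrt ((2 * pi) ^ CARD('n) / det M))"
proof -
  have det: "det M = (\<Prod>i\<in>UNIV. M $ i $ i)" by (rule det_diagonal) (rule diag)
  have entry: "M $ i $ j = (if i = j then M $ i $ i else 0)" for i j using diag by auto
  have "quad_form M x = (\<Sum>i\<in>UNIV. M $ i $ i * (x $ i)\<^sup>2)" for x
    unfolding quad_form_eq_sum
    by (subst entry) (simp add: if_distrib[of "\<lambda>y. _ * y"] power2_eq_square algebra_simps cong: if_cong)
  then have factor: "ennreal (exp (- quad_form M x / 2))
      = (\<Prod>b\<in>Basis. ennreal (exp (- ((b \<bullet> (M *v b)) * (x \<bullet> b)\<^sup>2) / 2)))" for x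
    by (simp add: exp_sum[symmetric] sum_negf sum_divide_distrib prod_ennreal prod_Basis_vec
        inner_axis_matrix_axis inner_axis)
  have "(\<integral>\<^sup>+x. ennreal (exp (- quad_form M x / 2)) \<partial>lborel)
      = (\<Prod>b\<in>Basis. (\<integral>\<^sup>+t. ennreal (exp (- ((b \<bullet> (M *v b)) * t\<^sup>2) / 2)) \<partial>lborel))"
    unfolding factor by (rule nn_integral_lborel_prod) auto
  also have "\<dots> = (\<Prod>i\<in>UNIV. ennreal (sqrt (2 * pi / M $ i $ i)))"
    unfolding prod_Basis_vec inner_axis_matrix_axis using nn_integral_gauss_1d[OF pos] by simp
  also have "\<dots> = ennreal (sqrt ((2 * pi) ^ CARD('n) / det M))"
    unfolding det using pos
    by (simp add: prod_ennreal real_sqrt_prod[symmetric] prod_dividef less_imp_le)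
  finally show ?thesis .
qed

lemma quad_form_split:
  fixes M :: "real^'n::finite^'n"
  shows "quad_form M x = x $ k * M $ k $ k * x $ k + (\<Sum>j\<in>UNIV-{k}. x $ k * M $ k $ j * x $ j)
     + (\<Sum>i\<in>UNIV-{k}. x $ i * M $ i $ k * x $ k) + (\<Sum>i\<in>UNIV-{k}. \<Sum>j\<in>UNIV-{k}. x $ i * M $ i $ j * x $ j)"
  unfolding quad_form_eq_sum by (simp add: sum.remove[of UNIV k] sum.distrib algebra_simps)

text \<open>Completing the square in \<open>x$k\<close>: \<open>M'\<close> is block diagonal, with blocks \<open>M$k$k\<close> and the Schur
  complement of \<open>M$k$k\<close> in \<open>M\<close>.\<close>

lemma quad_form_complete_square:
  fixes M :: "real^'n::finite^'n"
  assumes sym: "transpose M = M" and a: "M $ k $ k \<noteq> 0"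
  defines "M' \<equiv> \<chi> i j. if i = k \<and> j = k then M $ k $ k else if i = k \<or> j = k then 0
                      else M $ i $ j - M $ i $ k * M $ k $ j / M $ k $ k"
    and "w \<equiv> \<chi> j. if j = k then 0 else M $ k $ j / M $ k $ k"
  shows "quad_form M x = quad_form M' (x + (w \<bullet> x) *\<^sub>R axis k 1)"
proof -
  let ?a = "M $ k $ k" and ?R = "UNIV - {k}" and ?y = "x + (w \<bullet> x) *\<^sub>R axis k 1"
  define T where "T = (\<Sum>j\<in>?R. M $ k $ j * x $ j)"
  have wx: "w \<bullet> x = T / ?a"
    unfolding w_def T_def inner_vec_def
    by (simp add: sum.remove[of UNIV k] sum_divide_distrib if_distrib cong: if_cong)
  have yk: "?y $ k = x $ k + T / ?a"
    by (simp add: wx)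
  have yR: "?y $ j = x $ j" if "j \<in> ?R" for j
    using that by (simp add: axis_def)
  have Tsym: "(\<Sum>i\<in>?R. x $ i * M $ i $ k) = T"
    unfolding T_def using symmetric_matrix_entry[OF sym] by (simp add: mult.commute)
  have "(\<Sum>i\<in>?R. \<Sum>j\<in>?R. x $ i * (M $ i $ j - M $ i $ k * M $ k $ j / ?a) * x $ j)
      = (\<Sum>i\<in>?R. \<Sum>j\<in>?R. x $ i * M $ i $ j * x $ j) - (\<Sum>i\<in>?R. x $ i * M $ i $ k) * T / ?a"
    unfolding T_def sum_product sum_divide_distrib sum_subtractf[symmetric]
    by (intro sum.cong refl) (simp add: algebra_simps)
  moreover have "quad_form M' ?y = ?y $ k * ?a * ?y $ k
      + (\<Sum>i\<in>?R. \<Sum>j\<in>?R. ?y $ i * (M $ i $ j - M $ i $ k * M $ k $ j / ?a) * ?y $ j)"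
    unfolding quad_form_split[of M' _ k] by (simp add: M'_def)
  moreover have "(\<Sum>i\<in>?R. \<Sum>j\<in>?R. ?y $ i * (M $ i $ j - M $ i $ k * M $ k $ j / ?a) * ?y $ j)
      = (\<Sum>i\<in>?R. \<Sum>j\<in>?R. x $ i * (M $ i $ j - M $ i $ k * M $ k $ j / ?a) * x $ j)"
    by (intro sum.cong refl) (simp only: yR)
  ultimately have "quad_form M' ?y = (x $ k + T / ?a) * ?a * (x $ k + T / ?a)
      + (\<Sum>i\<in>?R. \<Sum>j\<in>?R. x $ i * M $ i $ j * x $ j) - T * T / ?a"
    unfolding yk Tsym by simp
  also have "\<dots> = x $ k * ?a * x $ k + x $ k * T + T * x $ k + (\<Sum>i\<in>?R. \<Sum>j\<in>?R. x $ i * M $ i $ j * x $ j)"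
    using a by (simp add: field_simps)
  also have "\<dots> = quad_form M x"
  proof -
    have "(\<Sum>j\<in>?R. x $ k * M $ k $ j * x $ j) = x $ k * T"
      unfolding T_def by (simp add: sum_distrib_left mult.assoc)
    moreover have "(\<Sum>i\<in>?R. x $ i * M $ i $ k * x $ k) = T * x $ k"
      unfolding Tsym[symmetric] by (simp add: sum_distrib_right)
    ultimately show ?thesis
      unfolding quad_form_split[of M _ k] by simp
  qed
  finally show ?thesis ..
qed

lemma det_eq_if_quad_form_shear:
  fixes M M' :: "real^'n::finite^'n"
  assumes sym: "transpose M = M" "transpose M' = M'" and wk: "w $ k = 0"
    and shear: "\<And>x. quad_form M x = quad_form M' (x + (w \<bullet> x) *\<^sub>R axis k 1)"
  shows "det M = det M'"
proof -
  define U :: "real^'n^'n" where "U = (\<chi> i. if i = k then axis k 1 + w else axis i 1)"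
  have U: "U *v x = x + (w \<bullet> x) *\<^sub>R axis k 1" for x
  proof -
    have ax: "axis k 1 $ i = (if i = k then 1 else 0)" for i :: 'n
      by (simp add: axis_def)
    have "(U *v x) $ i = (x + (w \<bullet> x) *\<^sub>R axis k 1) $ i" for i
      unfolding matrix_vector_mul_component U_def
      by (cases "i = k") (simp_all add: inner_add_left inner_axis' ax)
    then show ?thesis by (simp add: vec_eq_iff)
  qed
  have "U = (\<chi> i. if i = k then row k (mat 1) + (\<Sum>j\<in>UNIV-{k}. w $ j *s row j (mat 1)) else row i (mat 1))"
    using wk by (auto simp: vec_eq_iff U_def row_def mat_def axis_def if_distrib[of "\<lambda>x. _ * x"]
        sum.remove[of UNIV k] sum.delta cong: if_cong)
  also have "det \<dots> = det (mat 1 :: real^'n^'n)"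
    by (intro det_row_span vec.span_sum vec.span_scale vec.span_base) auto
  finally have "det U = 1" by simp
  moreover have "M = transpose U ** M' ** U"
  proof (rule symmetric_matrix_eqI)
    show "transpose (transpose U ** M' ** U) = transpose U ** M' ** U"
      using sym(2) by (simp add: matrix_transpose_mul matrix_mul_assoc)
    show "quad_form M x = quad_form (transpose U ** M' ** U) x" for x
      by (simp add: quad_form_matrix_vector_mult[symmetric] U shear)
  qed (rule sym(1))
  ultimately show ?thesis
    by (simp add: det_mul det_transpose)
qed

definition offdiag_rows :: "real^'n::finite^'n \<Rightarrow> 'n set" where
  "offdiag_rows M = {i. \<exists>j. j \<noteq> i \<and> M $ i $ j \<noteq> 0}"

text \<open>Completing the square in a coordinate \<open>k\<close> is a shear, which preserves Lebesgue measure and the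
  determinant; it clears row and column \<open>k\<close> without creating new off-diagonal entries.\<close>

lemma gauss_eliminate_offdiag_row:
  fixes M :: "real^'n::finite^'n"
  assumes sym: "transpose M = M" and pd: "\<And>v. v \<noteq> 0 \<Longrightarrow> quad_form M v > 0"
    and k: "k \<in> offdiag_rows M"
  obtains M' :: "real^'n^'n" where "transpose M' = M'" "\<And>v. v \<noteq> 0 \<Longrightarrow> quad_form M' v > 0"
    "card (offdiag_rows M') < card (offdiag_rows M)" "det M' = det M"
    "(\<integral>\<^sup>+x. ennreal (exp (- quad_form M x / 2)) \<partial>lborel)
       = (\<integral>\<^sup>+x. ennreal (exp (- quad_form M' x / 2)) \<partial>lborel)"
proof -
  have "M $ k $ k > 0"
    using pd[of "axis k 1"] by (simp add: quad_form_axis axis_eq_0_iff)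
  define M' :: "real^'n^'n" where "M' = (\<chi> i j. if i = k \<and> j = k then M $ k $ k
      else if i = k \<or> j = k then 0 else M $ i $ j - M $ i $ k * M $ k $ j / M $ k $ k)"
  define w :: "real^'n" where "w = (\<chi> j. if j = k then 0 else M $ k $ j / M $ k $ k)"
  have wk: "w $ k = 0" by (simp add: w_def)
  have shear: "quad_form M x = quad_form M' (x + (w \<bullet> x) *\<^sub>R axis k 1)" for x
    unfolding M'_def w_def by (rule quad_form_complete_square[OF sym]) (metis \<open>M $ k $ k > 0\<close> less_irrefl)
  have shear_inv: "w \<bullet> (x + t *\<^sub>R axis k 1) = w \<bullet> x" for x t
    using wk by (simp add: inner_add_right inner_axis)
  have sym': "transpose M' = M'"
    unfolding M'_def using symmetric_matrix_entry[OF sym]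
    by (auto simp: vec_eq_iff transpose_def mult.commute)
  have pd': "quad_form M' v > 0" if "v \<noteq> 0" for v
  proof -
    define x where "x = v - (w \<bullet> v) *\<^sub>R axis k 1"
    have "v = x + (w \<bullet> x) *\<^sub>R axis k 1"
      using shear_inv[of v "- (w \<bullet> v)"] by (simp add: x_def)
    moreover from this have "x \<noteq> 0" using that by auto
    ultimately show ?thesis using pd[of x] shear[of x] by simp
  qed
  have "offdiag_rows M' \<subseteq> offdiag_rows M - {k}"
  proof
    fix i assume "i \<in> offdiag_rows M'"
    then obtain j where j: "j \<noteq> i" "M' $ i $ j \<noteq> 0" unfolding offdiag_rows_def by auto
    then have "i \<noteq> k" "j \<noteq> k" unfolding M'_def by auto
    then have "M $ i $ j \<noteq> 0 \<or> M $ i $ k \<noteq> 0" using j unfolding M'_def by auto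
    then show "i \<in> offdiag_rows M - {k}"
      using j \<open>i \<noteq> k\<close> unfolding offdiag_rows_def by auto
  qed
  then have fewer: "card (offdiag_rows M') < card (offdiag_rows M)"
    using k by (intro psubset_card_mono) auto
  have "(\<integral>\<^sup>+x. ennreal (exp (- quad_form M x / 2)) \<partial>lborel)
      = (\<integral>\<^sup>+x. ennreal (exp (- quad_form M' (x + (w \<bullet> x) *\<^sub>R axis k 1) / 2)) \<partial>lborel)"
    unfolding shear ..
  also have "\<dots> = (\<integral>\<^sup>+x. ennreal (exp (- quad_form M' x / 2)) \<partial>lborel)"
    by (rule nn_integral_lborel_shear[where f = "\<lambda>x. ennreal (exp (- quad_form M' x / 2))"])
      (auto simp: shear_inv)
  finally show ?thesis
    using det_eq_if_quad_form_shear[OF sym sym' wk shear] by (intro that[OF sym' pd' fewer]) simp_all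
qed

lemma nn_integral_gauss_quad_form:
  fixes M :: "real^'n::finite^'n"
  assumes "transpose M = M" "\<And>v. v \<noteq> 0 \<Longrightarrow> quad_form M v > 0"
  shows "det M > 0 \<and>
    (\<integral>\<^sup>+x. ennreal (exp (- quad_form M x / 2)) \<partial>lborel) = ennreal (sqrt ((2 * pi) ^ CARD('n) / det M))"
  using assms
proof (induction "card (offdiag_rows M)" arbitrary: M rule: less_induct)
  case less
  show ?case
  proof (cases "offdiag_rows M = {}")
    case True
    then have diag: "M $ i $ j = 0" if "i \<noteq> j" for i j
      using that unfolding offdiag_rows_def by (metis (mono_tags, lifting) empty_iff mem_Collect_eq)
    have diag_pos: "M $ i $ i > 0" for i
      using less.prems(2)[of "axis i 1"] by (simp add: quad_form_axis axis_eq_0_iff)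
    have "det M = (\<Prod>i\<in>UNIV. M $ i $ i)"
      by (rule det_diagonal) (rule diag)
    also have "\<dots> > 0"
      using diag_pos by (simp add: prod_pos)
    finally show ?thesis
      using nn_integral_gauss_diagonal[OF diag diag_pos] by simp
  next
    case False
    then obtain k where k: "k \<in> offdiag_rows M" by auto
    obtain M' :: "real^'n^'n" where sym': "transpose M' = M'" and pd': "\<And>v. v \<noteq> 0 \<Longrightarrow> quad_form M' v > 0"
      and fewer: "card (offdiag_rows M') < card (offdiag_rows M)" and "det M' = det M"
      and "(\<integral>\<^sup>+x. ennreal (exp (- quad_form M x / 2)) \<partial>lborel)
             = (\<integral>\<^sup>+x. ennreal (exp (- quad_form M' x / 2)) \<partial>lborel)"
      using gauss_eliminate_offdiag_row[OF less.prems(1) less.prems(2) k] by blast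
    moreover have "det M' > 0 \<and> (\<integral>\<^sup>+x. ennreal (exp (- quad_form M' x / 2)) \<partial>lborel)
        = ennreal (sqrt ((2 * pi) ^ CARD('n) / det M'))"
      by (rule less.hyps[OF fewer sym' pd'])
    ultimately show ?thesis by simp
  qed
qed

section \<open>The Gaussian distribution and its Stein identity\<close>

lemma sym_pos_def_matrix_inv:
  fixes \<Sigma> :: "real^'n::finite^'n"
  assumes "sym_pos_def \<Sigma>"
  shows "\<Sigma> ** matrix_inv \<Sigma> = mat 1" "matrix_inv \<Sigma> ** \<Sigma> = mat 1"
    and "transpose (matrix_inv \<Sigma>) = matrix_inv \<Sigma>"
    and "\<And>v. v \<noteq> 0 \<Longrightarrow> quad_form (matrix_inv \<Sigma>) v > 0"
proof -
  have sym: "transpose \<Sigma> = \<Sigma>" and pd: "\<And>v. v \<noteq> 0 \<Longrightarrow> v \<bullet> (\<Sigma> *v v) > 0"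
    using assms unfolding sym_pos_def_def by auto
  have "\<forall>x. \<Sigma> *v x = 0 \<longrightarrow> x = 0" using pd by force
  then obtain B where "B ** \<Sigma> = mat 1" using matrix_left_invertible_ker by blast
  then have "invertible \<Sigma>" using invertible_left_inverse by blast
  then have inv: "\<Sigma> ** matrix_inv \<Sigma> = mat 1 \<and> matrix_inv \<Sigma> ** \<Sigma> = mat 1"
    unfolding matrix_inv_def invertible_def by (rule someI_ex)
  then show "\<Sigma> ** matrix_inv \<Sigma> = mat 1" "matrix_inv \<Sigma> ** \<Sigma> = mat 1" by auto
  let ?S = "matrix_inv \<Sigma>"
  have "transpose ?S ** \<Sigma> = mat 1"
    by (metis matrix_transpose_mul inv sym transpose_mat)
  then have "transpose ?S = transpose ?S ** (\<Sigma> ** ?S)" using inv by simp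
  also have "\<dots> = ?S" using \<open>transpose ?S ** \<Sigma> = mat 1\<close> by (simp add: matrix_mul_assoc)
  finally show "transpose ?S = ?S" .
  show "quad_form ?S v > 0" if "v \<noteq> 0" for v
  proof -
    have "\<Sigma> *v (?S *v v) = v" using inv by (simp add: matrix_vector_mul_assoc)
    then have "?S *v v \<noteq> 0" and "quad_form ?S v = (?S *v v) \<bullet> (\<Sigma> *v (?S *v v))"
      using that by (auto simp: quad_form_def inner_commute)
    then show ?thesis using pd by simp
  qed
qed

lemma sym_pos_def_det_pos:
  fixes \<Sigma> :: "real^'n::finite^'n"
  assumes "sym_pos_def \<Sigma>"
  shows "det \<Sigma> > 0"
  using nn_integral_gauss_quad_form[of \<Sigma>] assms unfolding sym_pos_def_def quad_form_def by blast

lemma gauss_density_eq: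
  "gauss_density \<mu> \<Sigma> x
     = exp (- quad_form (matrix_inv \<Sigma>) (x - \<mu>) / 2) / sqrt ((2 * pi) ^ CARD('n) * det \<Sigma>)"
  for \<mu> :: "real^'n::finite"
  unfolding gauss_density_def quad_form_def ..

lemma gauss_density_nonneg:
  fixes \<Sigma> :: "real^'n::finite^'n"
  assumes "sym_pos_def \<Sigma>"
  shows "gauss_density \<mu> \<Sigma> x \<ge> 0"
  using sym_pos_def_det_pos[OF assms] by (simp add: gauss_density_eq)

lemma continuous_on_gauss_density: "continuous_on UNIV (gauss_density \<mu> \<Sigma>)"
  unfolding gauss_density_eq[abs_def] divide_inverse
  by (intro continuous_intros continuous_on_compose2[OF continuous_on_quad_form]) auto

lemma borel_measurable_gauss_density [measurable]: "gauss_density \<mu> \<Sigma> \<in> borel_measurable borel"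
  by (rule borel_measurable_continuous_onI[OF continuous_on_gauss_density])

lemma nn_integral_gauss_density:
  fixes \<Sigma> :: "real^'n::finite^'n"
  assumes "sym_pos_def \<Sigma>"
  shows "(\<integral>\<^sup>+x. ennreal (gauss_density \<mu> \<Sigma> x) \<partial>lborel) = 1"
proof -
  let ?S = "matrix_inv \<Sigma>"
  define Z where "Z = sqrt ((2 * pi) ^ CARD('n) * det \<Sigma>)"
  have Z: "Z > 0" using sym_pos_def_det_pos[OF assms] unfolding Z_def by simp
  have "det ?S * det \<Sigma> = 1"
    using sym_pos_def_matrix_inv(2)[OF assms] det_mul[of ?S \<Sigma>] by simp
  then have "det ?S = 1 / det \<Sigma>"
    using sym_pos_def_det_pos[OF assms] by (simp add: field_simps)
  then have "(2 * pi) ^ CARD('n) / det ?S = (2 * pi) ^ CARD('n) * det \<Sigma>"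
    by simp
  then have normalizer: "(\<integral>\<^sup>+x. ennreal (exp (- quad_form ?S x / 2)) \<partial>lborel) = ennreal Z"
    using nn_integral_gauss_quad_form[of ?S] sym_pos_def_matrix_inv[OF assms] unfolding Z_def by simp
  have "(\<integral>\<^sup>+x. ennreal (gauss_density \<mu> \<Sigma> x) \<partial>lborel)
      = (\<integral>\<^sup>+x. ennreal (1 / Z) * ennreal (exp (- quad_form ?S (x - \<mu>) / 2)) \<partial>lborel)"
    using Z by (intro nn_integral_cong) (simp add: gauss_density_eq Z_def ennreal_mult[symmetric])
  also have "\<dots> = ennreal (1 / Z) * (\<integral>\<^sup>+x. ennreal (exp (- quad_form ?S (x - \<mu>) / 2)) \<partial>lborel)"
    by (rule nn_integral_cmult) measurable
  also have "\<dots> = ennreal (1 / Z) * ennreal Z"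
    unfolding normalizer[symmetric]
    by (subst nn_integral_lborel_translate[where f = "\<lambda>x. ennreal (exp (- quad_form ?S x / 2))"]) simp_all
  also have "\<dots> = 1"
    using Z by (simp flip: ennreal_mult)
  finally show ?thesis .
qed

lemma prob_space_gaussian:
  fixes \<Sigma> :: "real^'n::finite^'n"
  assumes "sym_pos_def \<Sigma>"
  shows "prob_space (gaussian \<mu> \<Sigma>)"
proof (rule prob_spaceI)
  have "emeasure (gaussian \<mu> \<Sigma>) UNIV = (\<integral>\<^sup>+x. ennreal (gauss_density \<mu> \<Sigma> x) * indicator UNIV x \<partial>lborel)"
    unfolding gaussian_def by (rule emeasure_density) auto
  then show "emeasure (gaussian \<mu> \<Sigma>) (space (gaussian \<mu> \<Sigma>)) = 1"
    using nn_integral_gauss_density[OF assms, of \<mu>] by (simp add: gaussian_def)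
qed

lemma power_div_fact_le_exp:
  fixes z :: real
  assumes "z \<ge> 0"
  shows "z ^ m / fact m \<le> exp z"
proof -
  have sums: "(\<lambda>n. z ^ n /\<^sub>R fact n) sums exp z" by (rule exp_converges)
  have "sum (\<lambda>n. z ^ n /\<^sub>R fact n) {m} \<le> suminf (\<lambda>n. z ^ n /\<^sub>R fact n)"
    by (rule sum_le_suminf) (use sums assms in \<open>auto simp: sums_iff\<close>)
  then show ?thesis using sums by (simp add: sums_iff divide_inverse mult.commute)
qed

text \<open>\<open>(b + s)^m \<le> m! e^(b+s)\<close> and \<open>s \<le> c s^2 + 1/(4c)\<close>.\<close>

lemma power_le_exp_square:
  fixes b s c :: real
  assumes "c > 0" "b + s \<ge> 0"
  shows "(b + s) ^ m \<le> fact m * exp (b + 1 / (4 * c)) * exp (c * s\<^sup>2)"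
proof -
  have "0 \<le> c * (s - 1 / (2 * c))\<^sup>2" using assms by simp
  also have "\<dots> = c * s\<^sup>2 - s + 1 / (4 * c)"
    using assms by (simp add: power2_eq_square field_simps)
  finally have "exp (b + s) \<le> exp (b + 1 / (4 * c)) * exp (c * s\<^sup>2)"
    by (simp flip: exp_add)
  moreover have "(b + s) ^ m \<le> fact m * exp (b + s)"
    using power_div_fact_le_exp[OF assms(2), of m] by (simp add: field_simps)
  ultimately show ?thesis
    by (simp add: mult.assoc order_trans[OF _ mult_left_mono])
qed

lemma quad_form_ge_norm_square:
  fixes M :: "real^'n::finite^'n"
  assumes pd: "\<And>v. v \<noteq> 0 \<Longrightarrow> quad_form M v > 0"
  obtains l where "l > 0" "\<And>v. quad_form M v \<ge> l * (norm v)\<^sup>2"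
proof -
  have "sphere (0::real^'n) 1 \<noteq> {}"
    using vector_choose_size[of 1] by (auto simp: sphere_def dist_norm)
  then obtain u where u: "u \<in> sphere 0 1" and min: "\<And>w. w \<in> sphere 0 1 \<Longrightarrow> quad_form M u \<le> quad_form M w"
    using continuous_attains_inf[OF compact_sphere _ continuous_on_subset[OF continuous_on_quad_form]]
    by blast
  have "quad_form M v \<ge> quad_form M u * (norm v)\<^sup>2" for v
  proof (cases "v = 0")
    case False
    then have "v = norm v *\<^sub>R ((1 / norm v) *\<^sub>R v)" and "(1 / norm v) *\<^sub>R v \<in> sphere 0 1"
      by simp_all
    then show ?thesis
      using min by (metis mult.commute mult_right_mono quad_form_scaleR zero_le_power2)
  qed (simp add: quad_form_def)
  moreover have "u \<noteq> 0" using u by auto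
  then have "quad_form M u > 0" by (rule pd)
  ultimately show ?thesis using that by blast
qed

lemma gauss_density_times_poly_le:
  fixes \<Sigma> :: "real^'n::finite^'n" and q :: "real^'n \<Rightarrow> real"
  assumes spd: "sym_pos_def \<Sigma>" and q: "\<And>x. \<bar>q x\<bar> \<le> D * (1 + norm x) ^ m"
  obtains C c where "c > 0" "\<And>x. \<bar>q x * gauss_density \<mu> \<Sigma> x\<bar> \<le> C * exp (- c * (norm (x - \<mu>))\<^sup>2)"
proof -
  obtain l where l: "l > 0" "\<And>v. quad_form (matrix_inv \<Sigma>) v \<ge> l * (norm v)\<^sup>2"
    using quad_form_ge_norm_square[OF sym_pos_def_matrix_inv(4)[OF spd]] by blast
  define Z where "Z = sqrt ((2 * pi) ^ CARD('n) * det \<Sigma>)"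
  define C where "C = D * fact m * exp (1 + norm \<mu> + 1 / l) / Z"
  have Z: "Z > 0" using sym_pos_def_det_pos[OF spd] unfolding Z_def by simp
  have D: "D \<ge> 0" using q[of 0] by simp
  have "\<bar>q x * gauss_density \<mu> \<Sigma> x\<bar> \<le> C * exp (- (l / 4) * (norm (x - \<mu>))\<^sup>2)" for x
  proof -
    let ?s = "norm (x - \<mu>)"
    have "(1 + norm x) ^ m \<le> (1 + norm \<mu> + ?s) ^ m"
      using norm_triangle_sub[of x \<mu>] by (intro power_mono) auto
    also have "\<dots> \<le> fact m * exp (1 + norm \<mu> + 1 / l) * exp (l / 4 * ?s\<^sup>2)"
      using power_le_exp_square[of "l / 4" "1 + norm \<mu>" ?s m] l by simp
    finally have "\<bar>q x\<bar> \<le> D * (fact m * exp (1 + norm \<mu> + 1 / l) * exp (l / 4 * ?s\<^sup>2))"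
      using q[of x] D by (meson mult_left_mono order_trans)
    moreover have "gauss_density \<mu> \<Sigma> x \<le> exp (- l * ?s\<^sup>2 / 2) / Z"
      unfolding gauss_density_eq Z_def[symmetric] using Z l(2)[of "x - \<mu>"]
      by (simp add: divide_right_mono)
    ultimately have "\<bar>q x\<bar> * gauss_density \<mu> \<Sigma> x
        \<le> D * (fact m * exp (1 + norm \<mu> + 1 / l) * exp (l / 4 * ?s\<^sup>2)) * (exp (- l * ?s\<^sup>2 / 2) / Z)"
      using gauss_density_nonneg[OF spd, of \<mu> x] D by (intro mult_mono) auto
    then have "\<bar>q x * gauss_density \<mu> \<Sigma> x\<bar>
        \<le> D * (fact m * exp (1 + norm \<mu> + 1 / l) * exp (l / 4 * ?s\<^sup>2)) * (exp (- l * ?s\<^sup>2 / 2) / Z)"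
      using gauss_density_nonneg[OF spd, of \<mu> x] by (simp add: abs_mult)
    also have "\<dots> = C * exp (- (l / 4) * ?s\<^sup>2)"
      by (simp add: C_def field_simps flip: exp_add)
    finally show ?thesis .
  qed
  then show ?thesis using that[of "l / 4"] l by auto
qed

lemma integrable_lborel_gauss_dominated:
  fixes f :: "real^'n::finite \<Rightarrow> real"
  assumes [measurable]: "f \<in> borel_measurable borel" and c: "c > 0"
    and bound: "\<And>x. \<bar>f x\<bar> \<le> C * exp (- c * (norm (x - \<mu>))\<^sup>2)"
  shows "integrable lborel f"
proof (rule Bochner_Integration.integrable_bound)
  have "(\<integral>\<^sup>+x. ennreal (exp (- c * (norm (x - \<mu>))\<^sup>2)) \<partial>lborel)
      = (\<integral>\<^sup>+x. ennreal (exp (- quad_form (mat (2 * c) :: real^'n^'n) x / 2)) \<partial>lborel)"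
    by (subst nn_integral_lborel_translate[where f = "\<lambda>x. ennreal (exp (- c * (norm x)\<^sup>2))"])
       (simp_all add: quad_form_mat)
  also have "\<dots> < \<infinity>"
    using c by (subst nn_integral_gauss_diagonal) (auto simp: mat_def)
  finally have "integrable lborel (\<lambda>x. exp (- c * (norm (x - \<mu>))\<^sup>2))"
    by (intro integrableI_nonneg) auto
  then show "integrable lborel (\<lambda>x. C * exp (- c * (norm (x - \<mu>))\<^sup>2))"
    by simp
  show "AE x in lborel. norm (f x) \<le> norm (C * exp (- c * (norm (x - \<mu>))\<^sup>2))"
    using bound by (auto intro!: AE_I2 order_trans[OF bound])
qed simp

lemma integrable_gaussian_monomial:
  fixes \<Sigma> :: "real^'n::finite^'n"
  assumes spd: "sym_pos_def \<Sigma>"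
  shows "integrable (gaussian \<mu> \<Sigma>) (monomial \<beta>)"
proof -
  have "\<bar>monomial \<beta> x\<bar> \<le> 1 * (1 + norm x) ^ mi_order \<beta>" for x
    using abs_monomial_le[of \<beta> x] by (simp add: order_trans[OF _ power_mono])
  then obtain C c where "c > 0" "\<And>x. \<bar>monomial \<beta> x * gauss_density \<mu> \<Sigma> x\<bar> \<le> C * exp (- c * (norm (x - \<mu>))\<^sup>2)"
    using gauss_density_times_poly_le[OF spd] by blast
  then have "integrable lborel (\<lambda>x. gauss_density \<mu> \<Sigma> x *\<^sub>R monomial \<beta> x)"
    by (intro integrable_lborel_gauss_dominated) (auto simp: mult.commute)
  then show ?thesis
    unfolding gaussian_def using gauss_density_nonneg[OF spd] by (subst integrable_density) auto
qed

lemma integral_lborel_eq_0_if_has_derivative: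
  fixes F f :: "real \<Rightarrow> real"
  assumes "\<And>y. (F has_real_derivative f y) (at y)" "continuous_on UNIV f" "integrable lborel f"
    and "(F \<longlongrightarrow> 0) at_top" "(F \<longlongrightarrow> 0) at_bot"
  shows "(\<integral>y. f y \<partial>lborel) = 0"
proof -
  have "(LBINT y=-\<infinity>..\<infinity>. f y) = 0 - 0"
    using assms
    by (intro interval_integral_FTC_integrable[where F = F])
       (auto simp: has_real_derivative_iff_has_vector_derivative continuous_on_eq_continuous_at
        einterval_eq_UNIV set_integrable_def ereal_tendsto_simps1)
  then show ?thesis
    by (simp add: interval_lebesgue_integral_def einterval_eq_UNIV set_lebesgue_integral_def)
qed

lemma integrable_exp_square:
  fixes c t :: real
  assumes c: "c > 0"
  shows "integrable lborel (\<lambda>y. exp (- c * (y - t)\<^sup>2))"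
proof -
  define \<sigma> where "\<sigma> = 1 / sqrt (2 * c)"
  have \<sigma>: "\<sigma> > 0" "2 * \<sigma>\<^sup>2 = 1 / c" using c by (auto simp: \<sigma>_def power_divide)
  then have "exp (- c * (y - t)\<^sup>2) = sqrt (2 * pi * \<sigma>\<^sup>2) * normal_density t \<sigma> y" for y
    unfolding normal_density_def using c by simp
  then show ?thesis
    using integrable_normal_density[OF \<sigma>(1)] by simp
qed

lemma gauss_dominated_line:
  fixes f :: "real^'n::finite \<Rightarrow> real"
  assumes bound: "\<And>x. \<bar>f x\<bar> \<le> C * exp (- c * (norm (x - \<mu>))\<^sup>2)" and c: "c > 0"
  shows "\<bar>f (x0 + y *\<^sub>R axis i 1)\<bar> \<le> C * exp (- c * (y - (\<mu> $ i - x0 $ i))\<^sup>2)"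
proof -
  let ?x = "x0 + y *\<^sub>R axis i 1"
  have "0 \<le> C * exp (- c * (norm (0 - \<mu>))\<^sup>2)" using bound[of 0] by (meson abs_ge_zero order_trans)
  then have C: "C \<ge> 0" by (simp add: zero_le_mult_iff)
  have "\<bar>y - (\<mu> $ i - x0 $ i)\<bar> \<le> norm (?x - \<mu>)"
    using component_le_norm_cart[of "?x - \<mu>" i] by (simp add: axis_def)
  then have "(y - (\<mu> $ i - x0 $ i))\<^sup>2 \<le> (norm (?x - \<mu>))\<^sup>2"
    by (metis abs_le_square_iff abs_norm_cancel)
  then have "exp (- c * (norm (?x - \<mu>))\<^sup>2) \<le> exp (- c * (y - (\<mu> $ i - x0 $ i))\<^sup>2)"
    using c by simp
  then show ?thesis using bound[of ?x] C by (meson mult_left_mono order_trans)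
qed

text \<open>By Fubini it suffices to integrate along lines parallel to \<open>axis i 1\<close>, where the fundamental
  theorem of calculus applies.\<close>

lemma integral_lborel_partial_eq_0:
  fixes F f :: "real^'n::finite \<Rightarrow> real"
  assumes deriv: "\<And>x y. ((\<lambda>y. F (x + y *\<^sub>R axis i 1)) has_real_derivative f (x + y *\<^sub>R axis i 1)) (at y)"
    and cont: "continuous_on UNIV f"
    and f: "\<And>x. \<bar>f x\<bar> \<le> C * exp (- c * (norm (x - \<mu>))\<^sup>2)" "c > 0"
    and F: "\<And>x. \<bar>F x\<bar> \<le> C' * exp (- c' * (norm (x - \<mu>))\<^sup>2)" "c' > 0"
  shows "(\<integral>x. f x \<partial>lborel) = 0"
proof -
  have [measurable]: "f \<in> borel_measurable borel"
    using borel_measurable_continuous_onI[OF cont] .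
  have "(\<integral>y. f (x0 + y *\<^sub>R axis i 1) \<partial>lborel) = 0" for x0
  proof (rule integral_lborel_eq_0_if_has_derivative[OF deriv])
    let ?t = "\<mu> $ i - x0 $ i"
    show "continuous_on UNIV (\<lambda>y. f (x0 + y *\<^sub>R axis i 1))"
      by (rule continuous_on_compose2[OF cont]) (auto intro!: continuous_intros)
    show "integrable lborel (\<lambda>y. f (x0 + y *\<^sub>R axis i 1))"
      using gauss_dominated_line[OF f, of x0 _ i]
      by (intro Bochner_Integration.integrable_bound[OF integrable_mult_right[OF integrable_exp_square[OF f(2), of ?t]]])
         (auto intro: AE_I2 order_trans[OF _ abs_ge_self])
    have top: "((\<lambda>y. C' * exp (- c' * (y - ?t)\<^sup>2)) \<longlongrightarrow> 0) at_top"
      and bot: "((\<lambda>y. C' * exp (- c' * (y - ?t)\<^sup>2)) \<longlongrightarrow> 0) at_bot"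
      using F(2) by real_asymp+
    have dom: "\<forall>y. norm (F (x0 + y *\<^sub>R axis i 1)) \<le> C' * exp (- c' * (y - ?t)\<^sup>2)"
      using gauss_dominated_line[OF F, of x0 _ i] by simp
    show "((\<lambda>y. F (x0 + y *\<^sub>R axis i 1)) \<longlongrightarrow> 0) at_top"
      by (rule Lim_null_comparison[OF always_eventually[OF dom] top])
    show "((\<lambda>y. F (x0 + y *\<^sub>R axis i 1)) \<longlongrightarrow> 0) at_bot"
      by (rule Lim_null_comparison[OF always_eventually[OF dom] bot])
  qed
  moreover have "integrable lborel f"
    by (rule integrable_lborel_gauss_dominated[OF _ f(2,1)]) measurable
  ultimately show ?thesis
    using integral_lborel_split_Basis[of f "axis i 1"] by simp
qed

lemma has_real_derivative_quad_form_line: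
  fixes S :: "real^'n::finite^'n"
  assumes sym: "transpose S = S"
  shows "((\<lambda>y. quad_form S (v + y *\<^sub>R axis i 1)) has_real_derivative 2 * (S *v (v + y *\<^sub>R axis i 1)) $ i) (at y)"
proof -
  have "v \<bullet> (S *v axis i 1) = (S *v v) $ i"
    using dot_lmul_matrix[of v S "axis i 1"] vector_transpose_matrix[of v S] sym
    by (simp add: inner_axis)
  then have "quad_form S (v + y *\<^sub>R axis i 1) = quad_form S v + 2 * y * (S *v v) $ i + y\<^sup>2 * S $ i $ i" for y
    unfolding quad_form_add quad_form_scaleR quad_form_axis
    by (simp add: matrix_vector_mult_scaleR inner_axis' power2_eq_square algebra_simps)
  moreover have "(S *v (v + y *\<^sub>R axis i 1)) $ i = (S *v v) $ i + y * S $ i $ i"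
    by (simp add: matrix_vector_right_distrib matrix_vector_mult_scaleR matrix_vector_mult_basis column_def)
  ultimately show ?thesis
    by (auto intro!: derivative_eq_intros simp: power2_eq_square algebra_simps)
qed

lemma has_real_derivative_gauss_density_line:
  fixes \<Sigma> :: "real^'n::finite^'n"
  assumes spd: "sym_pos_def \<Sigma>"
  shows "((\<lambda>y. gauss_density \<mu> \<Sigma> (x + y *\<^sub>R axis i 1)) has_real_derivative
     - (matrix_inv \<Sigma> *v (x + y *\<^sub>R axis i 1 - \<mu>)) $ i * gauss_density \<mu> \<Sigma> (x + y *\<^sub>R axis i 1)) (at y)"
proof -
  let ?S = "matrix_inv \<Sigma>" and ?e = "axis i 1 :: real^'n"
  let ?Z = "inverse (sqrt ((2 * pi) ^ CARD('n) * det \<Sigma>))"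
  have density: "gauss_density \<mu> \<Sigma> (x + y *\<^sub>R ?e) = exp (- quad_form ?S ((x - \<mu>) + y *\<^sub>R ?e) * (1/2)) * ?Z"
    for y
    unfolding gauss_density_eq divide_inverse by (simp add: algebra_simps)
  have deriv: "((\<lambda>y. exp (- quad_form ?S ((x - \<mu>) + y *\<^sub>R ?e) * (1/2)) * ?Z) has_real_derivative
      exp (- quad_form ?S ((x - \<mu>) + y *\<^sub>R ?e) * (1/2)) * (- (2 * (?S *v ((x - \<mu>) + y *\<^sub>R ?e)) $ i) * (1/2)) * ?Z)
      (at y)"
    by (intro DERIV_cmult_right DERIV_chain2[OF DERIV_exp] DERIV_minus
        has_real_derivative_quad_form_line[OF sym_pos_def_matrix_inv(3)[OF spd]])
  have shift: "x + y *\<^sub>R ?e - \<mu> = (x - \<mu>) + y *\<^sub>R ?e" by (simp add: algebra_simps)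
  have ring: "a * (- (2 * b) * (1/2)) * z = - b * (a * z)" for a b z :: real by simp
  show ?thesis
    unfolding density using deriv by (rule DERIV_cong) (simp only: shift ring)
qed

lemma continuous_on_stein_term: "continuous_on UNIV (stein_term \<mu> \<Sigma> \<beta> i)"
  unfolding stein_term_def[abs_def] matrix_vector_mult_def
  by (simp, intro continuous_intros continuous_on_monomial)

lemma abs_stein_term_le: "\<exists>D. \<forall>x. \<bar>stein_term \<mu> \<Sigma> \<beta> i x\<bar> \<le> D * (1 + norm x) ^ (mi_order \<beta> + 1)"
proof -
  let ?N = "mi_order \<beta> + 1"
  obtain K where K: "\<And>v. norm (matrix_inv \<Sigma> *v v) \<le> norm v * K" "K > 0"
    using bounded_linear.pos_bounded[OF matrix_vector_mul_bounded_linear[of "matrix_inv \<Sigma>"]] by blast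
  have "\<bar>stein_term \<mu> \<Sigma> \<beta> i x\<bar> \<le> (real (\<beta> i) + K * (1 + norm \<mu>)) * (1 + norm x) ^ ?N" for x
  proof -
    have monomial_le: "\<bar>monomial \<gamma> x\<bar> \<le> (1 + norm x) ^ n" if "mi_order \<gamma> \<le> n" for \<gamma> n
      using abs_monomial_le[of \<gamma> x] power_increasing[OF that, of "1 + norm x"]
        power_mono[of "norm x" "1 + norm x" "mi_order \<gamma>"] by simp
    have "\<bar>(matrix_inv \<Sigma> *v (x - \<mu>)) $ i\<bar> \<le> norm (x - \<mu>) * K"
      using component_le_norm_cart[of "matrix_inv \<Sigma> *v (x - \<mu>)" i] K(1)[of "x - \<mu>"] by simp
    also have "\<dots> \<le> (norm x + norm \<mu>) * K"
      using K(2) norm_triangle_ineq4[of x \<mu>] by (simp add: mult_right_mono)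
    also have "\<dots> \<le> K * (1 + norm \<mu>) * (1 + norm x)"
      using K(2) by (simp add: algebra_simps)
    finally have "\<bar>monomial \<beta> x * (matrix_inv \<Sigma> *v (x - \<mu>)) $ i\<bar>
        \<le> (1 + norm x) ^ mi_order \<beta> * (K * (1 + norm \<mu>) * (1 + norm x))"
      unfolding abs_mult by (intro mult_mono monomial_le) auto
    then have "\<bar>monomial \<beta> x * (matrix_inv \<Sigma> *v (x - \<mu>)) $ i\<bar> \<le> K * (1 + norm \<mu>) * (1 + norm x) ^ ?N"
      by (simp add: algebra_simps)
    moreover have "real (\<beta> i) * \<bar>monomial (mi_dec \<beta> i) x\<bar> \<le> real (\<beta> i) * (1 + norm x) ^ ?N"
      using mi_order_upd_le[of "\<beta> i - 1" \<beta> i] by (intro mult_left_mono monomial_le) simp_all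
    moreover have "\<bar>stein_term \<mu> \<Sigma> \<beta> i x\<bar>
        \<le> real (\<beta> i) * \<bar>monomial (mi_dec \<beta> i) x\<bar> + \<bar>monomial \<beta> x * (matrix_inv \<Sigma> *v (x - \<mu>)) $ i\<bar>"
      unfolding stein_term_def by (simp add: abs_mult order_trans[OF abs_triangle_ineq4])
    ultimately show ?thesis
      by (simp add: distrib_right)
  qed
  then show ?thesis by blast
qed

lemma integral_stein_term_gauss_density:
  fixes \<Sigma> :: "real^'n::finite^'n"
  assumes spd: "sym_pos_def \<Sigma>"
  shows "integrable lborel (\<lambda>x. stein_term \<mu> \<Sigma> \<beta> i x * gauss_density \<mu> \<Sigma> x)"
    and "(\<integral>x. stein_term \<mu> \<Sigma> \<beta> i x * gauss_density \<mu> \<Sigma> x \<partial>lborel) = 0"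
proof -
  let ?p = "gauss_density \<mu> \<Sigma>"
  obtain D where "\<And>x. \<bar>stein_term \<mu> \<Sigma> \<beta> i x\<bar> \<le> D * (1 + norm x) ^ (mi_order \<beta> + 1)"
    using abs_stein_term_le by blast
  then obtain C c where c: "c > 0"
    and bound: "\<And>x. \<bar>stein_term \<mu> \<Sigma> \<beta> i x * ?p x\<bar> \<le> C * exp (- c * (norm (x - \<mu>))\<^sup>2)"
    using gauss_density_times_poly_le[OF spd] by blast
  have "\<bar>monomial \<beta> x\<bar> \<le> 1 * (1 + norm x) ^ mi_order \<beta>" for x
    using abs_monomial_le[of \<beta> x] by (simp add: order_trans[OF _ power_mono])
  then obtain C' c' where c': "c' > 0"
    and bound': "\<And>x. \<bar>monomial \<beta> x * ?p x\<bar> \<le> C' * exp (- c' * (norm (x - \<mu>))\<^sup>2)"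
    using gauss_density_times_poly_le[OF spd] by blast
  have cont: "continuous_on UNIV (\<lambda>x. stein_term \<mu> \<Sigma> \<beta> i x * ?p x)"
    by (intro continuous_intros continuous_on_stein_term continuous_on_gauss_density)
  then show "integrable lborel (\<lambda>x. stein_term \<mu> \<Sigma> \<beta> i x * ?p x)"
    by (intro integrable_lborel_gauss_dominated[OF _ c bound] borel_measurable_continuous_onI)
  have "((\<lambda>y. monomial \<beta> (x + y *\<^sub>R axis i 1) * ?p (x + y *\<^sub>R axis i 1)) has_real_derivative
      stein_term \<mu> \<Sigma> \<beta> i (x + y *\<^sub>R axis i 1) * ?p (x + y *\<^sub>R axis i 1)) (at y)" for x y
    using DERIV_mult[OF has_real_derivative_monomial_line has_real_derivative_gauss_density_line[OF spd]]
    by (simp add: stein_term_def algebra_simps)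
  then show "(\<integral>x. stein_term \<mu> \<Sigma> \<beta> i x * ?p x \<partial>lborel) = 0"
    by (rule integral_lborel_partial_eq_0[OF _ cont bound c bound' c'])
qed

lemma integral_gaussian_stein_op_monomial:
  fixes \<Sigma> :: "real^'n::finite^'n"
  assumes spd: "sym_pos_def \<Sigma>"
  shows "(\<integral>x. stein_op \<mu> \<Sigma> (monomial \<alpha>) x \<partial>gaussian \<mu> \<Sigma>) = 0"
proof -
  have "stein_op \<mu> \<Sigma> (monomial \<alpha>) \<in> borel_measurable borel"
    unfolding stein_op_monomial[abs_def]
    using borel_measurable_continuous_onI[OF continuous_on_stein_term] by measurable
  then have "(\<integral>x. stein_op \<mu> \<Sigma> (monomial \<alpha>) x \<partial>gaussian \<mu> \<Sigma>)
      = (\<integral>x. (\<Sum>i\<in>UNIV. real (\<alpha> i) * (stein_term \<mu> \<Sigma> (mi_dec \<alpha> i) i x * gauss_density \<mu> \<Sigma> x)) \<partial>lborel)"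
    unfolding gaussian_def using gauss_density_nonneg[OF spd]
    by (subst integral_density) (auto simp: stein_op_monomial sum_distrib_left algebra_simps)
  also have "\<dots> = 0"
    using integral_stein_term_gauss_density[OF spd]
    by (subst Bochner_Integration.integral_sum) auto
  finally show ?thesis .
qed

section \<open>Polynomial Stein discrepancy\<close>

lemma moments_integrable_if_norm_powers:
  fixes Q :: "(real^'n::finite) measure"
  assumes "sets Q = sets borel" and "\<forall>k\<le>r. integrable Q (\<lambda>x. norm x ^ k)"
  shows "moments_integrable Q r"
  unfolding moments_integrable_def
proof (intro allI impI)
  fix \<beta> :: "'n \<Rightarrow> nat" assume "mi_order \<beta> \<le> r"
  show "integrable Q (monomial \<beta>)"
  proof (rule Bochner_Integration.integrable_bound)
    show "integrable Q (\<lambda>x. norm x ^ mi_order \<beta>)" using assms(2) \<open>mi_order \<beta> \<le> r\<close> by blast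
    show "monomial \<beta> \<in> borel_measurable Q"
      using borel_measurable_monomial measurable_cong_sets[OF assms(1) refl] by blast
  qed (simp add: abs_monomial_le)
qed

lemma sqrt_sum_squares_eq_0_iff:
  fixes f :: "'a \<Rightarrow> real"
  assumes "finite A"
  shows "sqrt (\<Sum>x\<in>A. (f x)\<^sup>2) = 0 \<longleftrightarrow> (\<forall>x\<in>A. f x = 0)"
  using sum_nonneg_eq_0_iff[OF assms, of "\<lambda>x. (f x)\<^sup>2"] by simp

theorem proposition1:
  fixes r :: nat and \<mu> :: "real^'n::finite" and \<Sigma> :: "real^'n^'n"
    and Q :: "(real^'n) measure"
  assumes "r \<ge> 1"
    and "sym_pos_def \<Sigma>"
    and "prob_space Q" and "sets Q = sets borel"
    and "\<forall>k\<le>r. integrable Q (\<lambda>x. norm x ^ k)"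
  shows "PSD r \<mu> \<Sigma> Q = 0 \<longleftrightarrow>
    (\<forall>\<alpha>::'n \<Rightarrow> nat. mi_order \<alpha> \<le> r \<longrightarrow>
       (\<integral>x. monomial \<alpha> x \<partial>Q) = (\<integral>x. monomial \<alpha> x \<partial>gaussian \<mu> \<Sigma>))"
proof -
  let ?P = "gaussian \<mu> \<Sigma>"
  let ?stein = "stein_moments (matrix_inv \<Sigma>) \<mu>"
  have Q: "moments_integrable Q (mi_order \<alpha>)" if "mi_order \<alpha> \<le> r" for \<alpha>
    using moments_integrable_if_norm_powers[OF assms(4,5)] that by (auto simp: moments_integrable_def)
  have P: "moments_integrable ?P k" for k
    using integrable_gaussian_monomial[OF assms(2)] by (simp add: moments_integrable_def)
  have "PSD r \<mu> \<Sigma> Q = 0 \<longleftrightarrow>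
      (\<forall>\<alpha>. 1 \<le> mi_order \<alpha> \<and> mi_order \<alpha> \<le> r \<longrightarrow> ?stein (\<lambda>\<beta>. \<integral>x. monomial \<beta> x \<partial>Q) \<alpha> = 0)"
    unfolding PSD_def
    by (subst sqrt_sum_squares_eq_0_iff)
       (auto intro: finite_subset[OF _ finite_mi_order_le] simp: integral_stein_op_monomial[OF Q])
  also have "\<dots> \<longleftrightarrow> (\<forall>\<beta>. mi_order \<beta> \<le> r \<longrightarrow> (\<integral>x. monomial \<beta> x \<partial>Q) = (\<integral>x. monomial \<beta> x \<partial>?P))"
  proof (rule stein_moments_determine_moments)
    show "v \<noteq> 0 \<Longrightarrow> v \<bullet> (matrix_inv \<Sigma> *v v) > 0" for v
      using sym_pos_def_matrix_inv(4)[OF assms(2)] by (simp add: quad_form_def)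
    show "?stein (\<lambda>\<beta>. \<integral>x. monomial \<beta> x \<partial>?P) \<alpha> = 0" for \<alpha>
      using integral_stein_op_monomial[OF P] integral_gaussian_stein_op_monomial[OF assms(2)] by metis
    show "(\<integral>x. monomial (\<lambda>_. 0) x \<partial>Q) = (\<integral>x. monomial (\<lambda>_. 0) x \<partial>?P)"
      using prob_space.prob_space[OF assms(3)] prob_space.prob_space[OF prob_space_gaussian[OF assms(2)]]
      by simp
  qed
  finally show ?thesis .
qed

end
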